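(* Let $\alpha\in(0,1)$, $\theta=\alpha/2$, and let $0=t_0<t_1<\cdots<t_N=T$ be a time mesh with steps $\tau_k=t_k-t_{k-1}$ and step ratios $r_k=\tau_k/\tau_{k-1}$ ($2\le k\le N$). Assume $r_k\ge r_\star(\alpha)$ for all $k\ge 2$, where $r_\star(\alpha)$ is the unique positive root $r$ of $$2\sqrt{\frac{2(1-\alpha/2)r}{1+\alpha+(1-\alpha/2)r}+\frac{r}{1+r}}+3-\frac{1}{r^2(1+r)}=0.$$ Then the auxiliary kernels $A^{(n)}_{n-k}$ (defined in the context) satisfy: (a) $A^{(n)}_{n-k-1}> A^{(n)}_{n-k}>0$ for $1\le k\le n-1$ ($n\ge2$); (b) $A^{(n-1)}_{n-1-k}>A^{(n)}_{n-k}$ for $1\le k\le n-1$ ($n\ge 2$); (c) $A^{(n-1)}_{n-2-k}-A^{(n-1)}_{n-1-k}> A^{(n)}_{n-k-1}-A^{(n)}_{n-k}$ for $1\le k\le n-2$ ($n\ge3$).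
   Context: Notation: $\omega_\beta(t):=t^{\beta-1}/\Gamma(\beta)$ for $\beta>0$ (and for $\beta=1-\alpha$ etc. by the same formula). Set $t_{n-\theta}:=\theta t_{n-1}+(1-\theta)t_n$ and $\varpi_n'(t):=\omega_{1-\alpha}(t_{n-\theta}-t)$ for $0\le t<t_{n-\theta}$. Define for $1\le k\le n$ $$a^{(n)}_{n-k}:=\frac{1}{\tau_k}\int_{t_{k-1}}^{\min\{t_k,t_{n-\theta}\}}\varpi_n'(s)\,ds,\qquad \zeta^{(n)}_{n-k}:=\frac{2}{\tau_k^2}\int_{t_{k-1}}^{t_k}(s-t_{k-1/2})\varpi_n'(s)\,ds,$$ where $t_{k-1/2}=(t_{k-1}+t_k)/2$. Define $\hat a^{(1)}_0:=\frac{2(1-\alpha)}{2-\alpha}a^{(1)}_0$ and, for $n\ge 2$, $\hat a^{(n)}_0:=\frac{2(1-\alpha)}{2-\alpha}a^{(n)}_0+\frac{1}{r_n(1+r_n)}\zeta^{(n)}_1$; $\hat a^{(n)}_{n-k}:=a^{(n)}_{n-k}+\frac{1}{r_k(1+r_k)}\zeta^{(n)}_{n-k+1}-\frac{1}{1+r_{k+1}}\zeta^{(n)}_{n-k}$ for $2\le k\le n-1$ ($n\ge3$); $\hat a^{(n)}_{n-1}:=a^{(n)}_{n-1}-\frac{1}{1+r_2}\zeta^{(n)}_{n-1}$. The auxiliary kernels are $A^{(n)}_0:=2\hat a^{(n)}_0$ and $A^{(n)}_{n-k}:=\hat a^{(n)}_{n-k}$ for $1\le k\le n-1$. *)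

theory Defs
  imports "HOL-Analysis.Analysis"
begin

definition tau :: "(nat \<Rightarrow> real) \<Rightarrow> nat \<Rightarrow> real" where
  "tau t k = t k - t (k - 1)"

definition ratio :: "(nat \<Rightarrow> real) \<Rightarrow> nat \<Rightarrow> real" where
  "ratio t k = tau t k / tau t (k - 1)"

definition omega :: "real \<Rightarrow> real \<Rightarrow> real" where
  "omega \<beta> x = x powr (\<beta> - 1) / Gamma \<beta>"

definition t_shift :: "real \<Rightarrow> (nat \<Rightarrow> real) \<Rightarrow> nat \<Rightarrow> real" where
  "t_shift \<alpha> t n = (\<alpha>/2) * t (n - 1) + (1 - \<alpha>/2) * t n"

definition varpi :: "real \<Rightarrow> (nat \<Rightarrow> real) \<Rightarrow> nat \<Rightarrow> real \<Rightarrow> real" where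
  "varpi \<alpha> t n s = omega (1 - \<alpha>) (t_shift \<alpha> t n - s)"

text \<open>a^{(n)}_{n-k}, indexed by j = n - k\<close>
definition akern :: "real \<Rightarrow> (nat \<Rightarrow> real) \<Rightarrow> nat \<Rightarrow> nat \<Rightarrow> real" where
  "akern \<alpha> t n j = (let k = n - j in
     (1 / tau t k) * integral {t (k - 1) .. min (t k) (t_shift \<alpha> t n)} (varpi \<alpha> t n))"

text \<open>zeta^{(n)}_{n-k}, indexed by j = n - k\<close>
definition zeta :: "real \<Rightarrow> (nat \<Rightarrow> real) \<Rightarrow> nat \<Rightarrow> nat \<Rightarrow> real" where
  "zeta \<alpha> t n j = (let k = n - j in
     (2 / (tau t k)^2) * integral {t (k - 1) .. t k}
        (\<lambda>s. (s - (t (k - 1) + t k) / 2) * varpi \<alpha> t n s))"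

text \<open>hat a^{(n)}_{n-k}, indexed by j = n - k (0 <= j <= n-1)\<close>
definition ahat :: "real \<Rightarrow> (nat \<Rightarrow> real) \<Rightarrow> nat \<Rightarrow> nat \<Rightarrow> real" where
  "ahat \<alpha> t n j =
    (if j = 0 then
       (if n = 1 then (2 * (1 - \<alpha>) / (2 - \<alpha>)) * akern \<alpha> t 1 0
        else (2 * (1 - \<alpha>) / (2 - \<alpha>)) * akern \<alpha> t n 0
             + 1 / (ratio t n * (1 + ratio t n)) * zeta \<alpha> t n 1)
     else if j = n - 1 then
       akern \<alpha> t n (n - 1) - 1 / (1 + ratio t 2) * zeta \<alpha> t n (n - 1)
     else (let k = n - j in
       akern \<alpha> t n j + 1 / (ratio t k * (1 + ratio t k)) * zeta \<alpha> t n (j + 1)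
         - 1 / (1 + ratio t (k + 1)) * zeta \<alpha> t n j))"

text \<open>Auxiliary kernels A^{(n)}_{n-k}, indexed by j = n - k\<close>
definition Akern :: "real \<Rightarrow> (nat \<Rightarrow> real) \<Rightarrow> nat \<Rightarrow> nat \<Rightarrow> real" where
  "Akern \<alpha> t n j = (if j = 0 then 2 * ahat \<alpha> t n 0 else ahat \<alpha> t n j)"

definition rstar_eq :: "real \<Rightarrow> real \<Rightarrow> real" where
  "rstar_eq \<alpha> r = 2 * sqrt (2 * (1 - \<alpha>/2) * r / (1 + \<alpha> + (1 - \<alpha>/2) * r) + r / (1 + r))
      + 3 - 1 / (r^2 * (1 + r))"

definition rstar :: "real \<Rightarrow> real" where
  "rstar \<alpha> = (THE r. r > 0 \<and> rstar_eq \<alpha> r = 0)"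

end

theory Submission
  imports Defs
begin

text \<open>
  For 1 \<le> k \<le> n - 1 the kernel A^(n)_(n-k) is a linear functional of phi = varpi'_n:
  the mean of phi over [t_(k-1), t_k], plus its first moment over [t_(k-2), t_(k-1)] weighted
  by 1/(r_k (1 + r_k)), minus its first moment over [t_(k-1), t_k] weighted by 1/(1 + r_(k+1));
  and A^(n)_0 is twice phi(t_(n-1)) plus the same previous-moment term.
  On [t_0, t_(n-1)] the function varpi'_n, and on [t_0, t_(n-2)] the difference
  varpi'_(n-1) - varpi'_n, is positive, increasing and convex, and nothing else is used.
  For such a function, chord and tangent-line bounds control means and moments on each
  interval; they make the functional positive and strictly increasing in k as soon as
  r_k^2 (1 + r_k) > 1/5, which holds because every r_k \<ge> r_star(alpha) > 0.385.
  Applied to varpi'_n this gives (a); applied to varpi'_(n-1) - varpi'_n it gives (b) and (c)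
  by linearity, except at the top index, where the scaling
  omega_(1-alpha)(mu x) \<le> max 1 (1/mu) omega_(1-alpha)(x) of the kernel supplies
  varpi'_n(t_(n-1)) < 3 varpi'_(n-1)(t_(n-2)).
\<close>

section \<open>A lower bound for the threshold ratio\<close>

lemma rstar_eq_strict_mono:
  fixes \<alpha> r1 r2 :: real
  assumes "0 < \<alpha>" "\<alpha> < 1" "0 < r1" "r1 < r2"
  shows "rstar_eq \<alpha> r1 < rstar_eq \<alpha> r2"
proof -
  define c where "c = 1 - \<alpha>/2"
  have c: "c > 0" using assms by (simp add: c_def)
  have d1: "1 + \<alpha> + c * r1 > 0" "1 + \<alpha> + c * r2 > 0" using assms c by (auto intro!: add_pos_pos)
  have "c * r1 * (1 + \<alpha>) \<le> c * r2 * (1 + \<alpha>)" using assms c by (intro mult_right_mono) auto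
  then have "(2 * c * r1) * (1 + \<alpha> + c * r2) \<le> (2 * c * r2) * (1 + \<alpha> + c * r1)"
    by (simp add: algebra_simps)
  then have m1: "2 * c * r1 / (1 + \<alpha> + c * r1) \<le> 2 * c * r2 / (1 + \<alpha> + c * r2)"
    using d1 by (simp add: divide_simps)
  have m2: "r1 / (1 + r1) \<le> r2 / (1 + r2)"
    using assms by (simp add: divide_simps algebra_simps)
  have sqrt_mono: "sqrt (2 * c * r1 / (1 + \<alpha> + c * r1) + r1 / (1 + r1))
      \<le> sqrt (2 * c * r2 / (1 + \<alpha> + c * r2) + r2 / (1 + r2))"
    using m1 m2 by (intro real_sqrt_le_mono) linarith
  have "r1^2 * (1 + r1) < r2^2 * (1 + r2)"
    using assms by (intro mult_strict_mono power_strict_mono) auto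
  then have "1 / (r2^2 * (1 + r2)) < 1 / (r1^2 * (1 + r1))"
    using assms by (intro divide_strict_left_mono) auto
  then show ?thesis using sqrt_mono unfolding rstar_eq_def c_def[symmetric] by linarith
qed

lemma rstar_eq_neg:
  fixes \<alpha> :: real
  assumes "0 < \<alpha>" "\<alpha> < 1"
  shows "rstar_eq \<alpha> (385/1000) < 0"
proof -
  define r :: real where "r = 385/1000"
  define c where "c = 1 - \<alpha>/2"
  have c: "c > 0" "c \<le> 1" using assms by (auto simp: c_def)
  have "c * r \<le> r * (1 + \<alpha>)" using c assms by (simp add: r_def)
  then have "(c * r) * (1 + r) \<le> r * (1 + \<alpha> + c * r)" by (simp add: algebra_simps)
  moreover have "1 + \<alpha> + c * r > 0" using c assms by (auto simp: r_def intro!: add_pos_pos)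
  ultimately have "c * r / (1 + \<alpha> + c * r) \<le> r / (1 + r)"
    by (simp add: divide_simps r_def)
  then have "2 * c * r / (1 + \<alpha> + c * r) \<le> 2 * r / (1 + r)"
    by (simp add: mult.assoc)
  then have "sqrt (2 * c * r / (1 + \<alpha> + c * r) + r / (1 + r)) \<le> sqrt (3 * r / (1 + r))"
    by (intro real_sqrt_le_mono) (simp add: r_def)
  also have "\<dots> \<le> 914/1000"
    by (rule real_le_lsqrt) (auto simp: r_def power2_eq_square)
  finally have "sqrt (2 * c * r / (1 + \<alpha> + c * r) + r / (1 + r)) \<le> 914/1000" .
  moreover have "1 / (r^2 * (1 + r)) > 2 * (914/1000) + 3" by (simp add: r_def power2_eq_square)
  ultimately show ?thesis unfolding rstar_eq_def c_def[symmetric] r_def[symmetric]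
    by linarith
qed

lemma rstar_eq_half_pos:
  fixes \<alpha> :: real
  assumes "0 < \<alpha>" "\<alpha> < 1"
  shows "rstar_eq \<alpha> (1/2) > 0"
proof -
  have "sqrt (2 * (1 - \<alpha>/2) * (1/2) / (1 + \<alpha> + (1 - \<alpha>/2) * (1/2)) + (1/2) / (1 + 1/2)) \<ge> 0"
    using assms by (intro real_sqrt_ge_zero add_nonneg_nonneg divide_nonneg_pos) (auto simp: algebra_simps)
  moreover have "1 / ((1/2::real)^2 * (1 + 1/2)) < 3" by (simp add: power2_eq_square)
  ultimately show ?thesis unfolding rstar_eq_def by linarith
qed

lemma continuous_on_rstar_eq:
  fixes \<alpha> :: real
  assumes "0 < \<alpha>" "\<alpha> < 1"
  shows "continuous_on {0<..} (rstar_eq \<alpha>)"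
proof (rule continuous_at_imp_continuous_on, rule ballI)
  fix x :: real assume "x \<in> {0<..}"
  then have x: "x > 0" by auto
  moreover have "(1 - \<alpha>/2) * x > 0" using x assms by auto
  ultimately have "1 + \<alpha> + (1 - \<alpha>/2) * x \<noteq> 0" "1 + x \<noteq> 0" "x^2 * (1 + x) \<noteq> 0"
    using assms x by (linarith, auto)
  then show "isCont (rstar_eq \<alpha>) x" unfolding rstar_eq_def[abs_def]
    by (intro continuous_intros) auto
qed

lemma rstar_gt:
  fixes \<alpha> :: real
  assumes "0 < \<alpha>" "\<alpha> < 1"
  shows "385/1000 < rstar \<alpha>"
proof -
  obtain x where x: "385/1000 \<le> x" "x \<le> 1/2" "rstar_eq \<alpha> x = 0"
    using IVT'[of "rstar_eq \<alpha>" "385/1000" 0 "1/2"] rstar_eq_neg[OF assms] rstar_eq_half_pos[OF assms]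
      continuous_on_subset[OF continuous_on_rstar_eq[OF assms], of "{385/1000..1/2}"] by force
  have unique: "y = x" if "y > 0" "rstar_eq \<alpha> y = 0" for y
    using rstar_eq_strict_mono[OF assms, of y x] rstar_eq_strict_mono[OF assms, of x y] x that
    by (cases "y < x"; cases "x < y") auto
  have "rstar \<alpha> = x" unfolding rstar_def
    by (rule the_equality) (use x unique in auto)
  moreover have "x \<noteq> 385/1000" using x(3) rstar_eq_neg[OF assms] by (metis less_irrefl)
  ultimately show ?thesis using x by auto
qed

section \<open>Means and first moments of convex functions\<close>

definition mono_slope :: "(real \<Rightarrow> real) \<Rightarrow> (real \<Rightarrow> real) \<Rightarrow> real \<Rightarrow> real \<Rightarrow> bool" where
  "mono_slope \<phi> \<phi>' a b \<longleftrightarrow> continuous_on {a..b} \<phi> \<and>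
     (\<forall>x y. a \<le> x \<longrightarrow> x \<le> y \<longrightarrow> y \<le> b \<longrightarrow>
        \<phi>' x * (y - x) \<le> \<phi> y - \<phi> x \<and> \<phi> y - \<phi> x \<le> \<phi>' y * (y - x))"

lemma mono_slope_continuous: "mono_slope \<phi> \<phi>' a b \<Longrightarrow> continuous_on {a..b} \<phi>"
  by (simp add: mono_slope_def)

lemma mono_slope_lower:
  "mono_slope \<phi> \<phi>' a b \<Longrightarrow> a \<le> x \<Longrightarrow> x \<le> y \<Longrightarrow> y \<le> b \<Longrightarrow> \<phi>' x * (y - x) \<le> \<phi> y - \<phi> x"
  by (simp add: mono_slope_def)

lemma mono_slope_upper:
  "mono_slope \<phi> \<phi>' a b \<Longrightarrow> a \<le> x \<Longrightarrow> x \<le> y \<Longrightarrow> y \<le> b \<Longrightarrow> \<phi> y - \<phi> x \<le> \<phi>' y * (y - x)"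
  by (simp add: mono_slope_def)

lemma mono_slope_subinterval: "mono_slope \<phi> \<phi>' a b \<Longrightarrow> a \<le> c \<Longrightarrow> d \<le> b \<Longrightarrow> mono_slope \<phi> \<phi>' c d"
  unfolding mono_slope_def by (auto intro: continuous_on_subset)

lemma mono_slope_slope_mono:
  assumes "mono_slope \<phi> \<phi>' a b" "a \<le> x" "x \<le> y" "y \<le> b"
  shows "\<phi>' x \<le> \<phi>' y"
proof (cases "x = y")
  case False
  then have "x < y" using assms by auto
  have "\<phi>' x * (y - x) \<le> \<phi>' y * (y - x)"
    using mono_slope_lower[OF assms] mono_slope_upper[OF assms] by linarith
  then show ?thesis using \<open>x < y\<close> by simp
qed simp

lemma mono_slopeI:
  assumes der: "\<And>x. a \<le> x \<Longrightarrow> x \<le> b \<Longrightarrow> (\<phi> has_real_derivative \<phi>' x) (at x)"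
    and mono: "\<And>x y. a \<le> x \<Longrightarrow> x \<le> y \<Longrightarrow> y \<le> b \<Longrightarrow> \<phi>' x \<le> \<phi>' y"
  shows "mono_slope \<phi> \<phi>' a b"
  unfolding mono_slope_def
proof (intro conjI allI impI)
  show "continuous_on {a..b} \<phi>"
    using der by (intro continuous_at_imp_continuous_on ballI) (meson DERIV_isCont atLeastAtMost_iff)
next
  fix x y assume xy: "a \<le> x" "x \<le> y" "y \<le> b"
  have "\<phi>' x * (y - x) \<le> \<phi> y - \<phi> x \<and> \<phi> y - \<phi> x \<le> \<phi>' y * (y - x)"
  proof (cases "x = y")
    case False
    then have "x < y" using xy by auto
    obtain z where z: "x < z" "z < y" "\<phi> y - \<phi> x = (y - x) * \<phi>' z"
      using MVT2[OF \<open>x < y\<close>, of \<phi> \<phi>'] der xy by force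
    have "\<phi>' x \<le> \<phi>' z" "\<phi>' z \<le> \<phi>' y" using mono xy z by auto
    then show ?thesis using z \<open>x < y\<close> by (auto simp: mult.commute intro: mult_right_mono)
  qed simp
  then show "\<phi>' x * (y - x) \<le> \<phi> y - \<phi> x" "\<phi> y - \<phi> x \<le> \<phi>' y * (y - x)" by auto
qed

lemma mono_slope_secant:
  assumes \<phi>: "mono_slope \<phi> \<phi>' a b" and x: "x \<in> {a..b}" and y: "y \<in> {a..b}"
  shows "\<phi>' a * (y - x)^2 \<le> (y - x) * (\<phi> y - \<phi> x)"
    and "(y - x) * (\<phi> y - \<phi> x) \<le> \<phi>' b * (y - x)^2"
proof -
  have ordered: "\<phi>' a * (v - u)^2 \<le> (v - u) * (\<phi> v - \<phi> u) \<and> (v - u) * (\<phi> v - \<phi> u) \<le> \<phi>' b * (v - u)^2"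
    if "a \<le> u" "u \<le> v" "v \<le> b" for u v
  proof -
    have "\<phi>' a * (v - u) \<le> \<phi>' u * (v - u)"
      using mono_slope_slope_mono[OF \<phi>, of a u] that by (intro mult_right_mono) auto
    also have "\<dots> \<le> \<phi> v - \<phi> u" using mono_slope_lower[OF \<phi> that] .
    finally have lo: "\<phi>' a * (v - u) \<le> \<phi> v - \<phi> u" .
    have "\<phi> v - \<phi> u \<le> \<phi>' v * (v - u)" using mono_slope_upper[OF \<phi> that] .
    also have "\<dots> \<le> \<phi>' b * (v - u)"
      using mono_slope_slope_mono[OF \<phi>, of v b] that by (intro mult_right_mono) auto
    finally have up: "\<phi> v - \<phi> u \<le> \<phi>' b * (v - u)" .
    show ?thesis
      using mult_left_mono[OF lo, of "v - u"] mult_left_mono[OF up, of "v - u"] that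
      by (simp add: power2_eq_square algebra_simps)
  qed
  have sym: "(y - x) * (\<phi> y - \<phi> x) = (x - y) * (\<phi> x - \<phi> y)" "(y - x)^2 = (x - y)^2"
    by (simp_all add: algebra_simps power2_commute)
  show "\<phi>' a * (y - x)^2 \<le> (y - x) * (\<phi> y - \<phi> x)" "(y - x) * (\<phi> y - \<phi> x) \<le> \<phi>' b * (y - x)^2"
    using ordered[of x y] ordered[of y x] x y unfolding sym by (cases "x \<le> y"; force)+
qed

lemma mono_slope_integrable: "mono_slope \<phi> \<phi>' a b \<Longrightarrow> \<phi> integrable_on {a..b}"
  by (intro integrable_continuous_interval mono_slope_continuous)

lemma mono_slope_integrable_weighted:
  "mono_slope \<phi> \<phi>' a b \<Longrightarrow> (\<lambda>s. (s - m) * \<phi> s) integrable_on {a..b}"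
  by (intro integrable_continuous_interval continuous_intros mono_slope_continuous)

definition avg :: "(real \<Rightarrow> real) \<Rightarrow> real \<Rightarrow> real \<Rightarrow> real" where
  "avg \<phi> a b = integral {a..b} \<phi> / (b - a)"

definition moment :: "(real \<Rightarrow> real) \<Rightarrow> real \<Rightarrow> real \<Rightarrow> real" where
  "moment \<phi> a b = 2 / (b - a)^2 * integral {a..b} (\<lambda>s. (s - (a + b) / 2) * \<phi> s)"

lemma avg_diff:
  assumes "f integrable_on {a..b}" "g integrable_on {a..b}"
  shows "avg (\<lambda>s. f s - g s) a b = avg f a b - avg g a b"
  unfolding avg_def using integral_diff[OF assms] by (simp add: diff_divide_distrib)

lemma moment_diff:
  assumes "continuous_on {a..b} f" "continuous_on {a..b} g"
  shows "moment (\<lambda>s. f s - g s) a b = moment f a b - moment g a b"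
proof -
  define m where "m = (a + b) / 2"
  have "(\<lambda>s. (s - m) * (f s - g s)) = (\<lambda>s. (s - m) * f s - (s - m) * g s)"
    by (simp add: algebra_simps)
  moreover have "integral {a..b} (\<lambda>s. (s - m) * f s - (s - m) * g s)
      = integral {a..b} (\<lambda>s. (s - m) * f s) - integral {a..b} (\<lambda>s. (s - m) * g s)"
    using assms by (intro integral_diff integrable_continuous_interval continuous_intros)
  ultimately show ?thesis unfolding moment_def m_def[symmetric] by (simp only: right_diff_distrib)
qed

lemma has_integral_real_FTC:
  fixes G g :: "real \<Rightarrow> real"
  assumes "a \<le> b" "\<And>x. (G has_real_derivative g x) (at x)"
  shows "(g has_integral (G b - G a)) {a..b}"
  using assms
  by (intro fundamental_theorem_of_calculus)
     (auto simp: has_real_derivative_iff_has_vector_derivative[symmetric] intro: has_field_derivative_at_within)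

lemma has_integral_centered_quadratic:
  fixes a b K c :: real
  assumes "a \<le> b"
  shows "((\<lambda>s. (s - (a + b) / 2) * K + c * (s - (a + b) / 2)^2) has_integral (c * (b - a)^3 / 12)) {a..b}"
proof -
  define G where "G = (\<lambda>s. K * (s - (a + b) / 2)^2 / 2 + c * (s - (a + b) / 2)^3 / 3)"
  have "((\<lambda>s. (s - (a + b) / 2) * K + c * (s - (a + b) / 2)^2) has_integral (G b - G a)) {a..b}"
    unfolding G_def using assms
    by (intro has_integral_real_FTC) (auto intro!: derivative_eq_intros simp: power2_eq_square field_simps)
  moreover have "G b - G a = c * (b - a)^3 / 12"
    unfolding G_def by (simp add: power2_eq_square power3_eq_cube field_simps)
  ultimately show ?thesis by simp
qed

lemma moment_bounds:
  assumes \<phi>: "mono_slope \<phi> \<phi>' a b" and ab: "a < b"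
  shows "\<phi>' a * (b - a) / 6 \<le> moment \<phi> a b" and "moment \<phi> a b \<le> \<phi>' b * (b - a) / 6"
proof -
  define m where "m = (a + b) / 2"
  have m: "m \<in> {a..b}" using ab by (simp add: m_def)
  have scale: "2 / L^2 * (c * L^3 / 12) = c * L / 6" if "L > 0" for c L :: real
    using that by (simp add: power2_eq_square power3_eq_cube field_simps)
  note quad = has_integral_centered_quadratic[of a b "\<phi> m", folded m_def]
  note int = integrable_integral[OF mono_slope_integrable_weighted[OF \<phi>, of m]]
  have pointwise: "(s - m) * \<phi> m + c * (s - m)^2 \<le> (s - m) * \<phi> s \<longleftrightarrow> c * (s - m)^2 \<le> (s - m) * (\<phi> s - \<phi> m)"
    "(s - m) * \<phi> s \<le> (s - m) * \<phi> m + c * (s - m)^2 \<longleftrightarrow> (s - m) * (\<phi> s - \<phi> m) \<le> c * (s - m)^2" for s c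
    by (simp_all add: algebra_simps)
  have "\<phi>' a * (b - a)^3 / 12 \<le> integral {a..b} (\<lambda>s. (s - m) * \<phi> s)"
    using has_integral_le[OF quad int] mono_slope_secant(1)[OF \<phi> m] ab unfolding pointwise by auto
  then show "\<phi>' a * (b - a) / 6 \<le> moment \<phi> a b"
    unfolding moment_def m_def[symmetric] scale[OF diff_gt_0_iff_gt[THEN iffD2, OF ab], symmetric]
    using ab by (intro mult_left_mono) auto
  have "integral {a..b} (\<lambda>s. (s - m) * \<phi> s) \<le> \<phi>' b * (b - a)^3 / 12"
    using has_integral_le[OF int quad] mono_slope_secant(2)[OF \<phi> m] ab unfolding pointwise by auto
  then show "moment \<phi> a b \<le> \<phi>' b * (b - a) / 6"
    unfolding moment_def m_def[symmetric] scale[OF diff_gt_0_iff_gt[THEN iffD2, OF ab], symmetric]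
    using ab by (intro mult_left_mono) auto
qed

lemma moment_nonneg: "mono_slope \<phi> \<phi>' a b \<Longrightarrow> a < b \<Longrightarrow> 0 \<le> \<phi>' a \<Longrightarrow> 0 \<le> moment \<phi> a b"
  using moment_bounds(1)[of \<phi> \<phi>' a b] by (smt (verit) divide_nonneg_pos mult_nonneg_nonneg)

lemma avg_le_chord:
  assumes \<phi>: "mono_slope \<phi> \<phi>' a b" and ab: "a < b"
  shows "avg \<phi> a b \<le> (\<phi> a + \<phi> b) / 2"
proof -
  define L where "L = b - a"
  define k where "k = (\<phi> b - \<phi> a) / L"
  have L: "L > 0" using ab by (simp add: L_def)
  have below_chord: "\<phi> s \<le> \<phi> a + k * (s - a)" if s: "s \<in> {a..b}" for s
  proof -
    have s1: "a \<le> s" "s \<le> b" using s by auto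
    have "(\<phi> s - \<phi> a) * (b - s) \<le> \<phi>' s * (s - a) * (b - s)"
      using mono_slope_upper[OF \<phi> _ s1] s1 by (intro mult_right_mono) auto
    also have "\<dots> = \<phi>' s * (b - s) * (s - a)" by simp
    also have "\<dots> \<le> (\<phi> b - \<phi> s) * (s - a)"
      using mono_slope_lower[OF \<phi> s1 order_refl] s1 by (intro mult_right_mono) auto
    finally have "\<phi> s * L \<le> \<phi> a * L + (\<phi> b - \<phi> a) * (s - a)"
      by (simp add: L_def algebra_simps)
    then show ?thesis using L by (simp add: k_def field_simps)
  qed
  have "((\<lambda>s. \<phi> a + k * (s - a)) has_integral
      ((\<lambda>s. \<phi> a * s + k * (s - a)^2 / 2) b - (\<lambda>s. \<phi> a * s + k * (s - a)^2 / 2) a)) {a..b}"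
    using ab by (intro has_integral_real_FTC) (auto intro!: derivative_eq_intros simp: power2_eq_square field_simps)
  then have "integral {a..b} \<phi> \<le> \<phi> a * L + (k * L) * L / 2"
    using has_integral_le[OF integrable_integral[OF mono_slope_integrable[OF \<phi>]]] below_chord
    by (fastforce simp: L_def power2_eq_square algebra_simps)
  also have "\<dots> = L * (\<phi> a + \<phi> b) / 2" using L by (simp add: k_def field_simps)
  finally show ?thesis using L unfolding avg_def L_def[symmetric] by (simp add: field_simps)
qed

lemma avg_le_two_chords:
  assumes \<phi>: "mono_slope \<phi> \<phi>' a b" and ab: "a < b"
  shows "avg \<phi> a b \<le> (\<phi> a + 2 * \<phi> ((a + b) / 2) + \<phi> b) / 4"
proof -
  define m where "m = (a + b) / 2"
  have m: "a < m" "m < b" using ab by (auto simp: m_def)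
  have combine: "integral {a..b} \<phi> = integral {a..m} \<phi> + integral {m..b} \<phi>"
    using m mono_slope_integrable[OF \<phi>] by (intro Henstock_Kurzweil_Integration.integral_combine[symmetric]) auto
  have halves: "m - a = (b - a) / 2" "b - m = (b - a) / 2" by (auto simp: m_def field_simps)
  have split_mean: "(x + y) / L = (x / (L / 2) + y / (L / 2)) / 2" for x y L :: real
    by (cases "L = 0") (simp_all add: field_simps)
  have "avg \<phi> a b = (avg \<phi> a m + avg \<phi> m b) / 2"
    unfolding avg_def combine halves by (rule split_mean)
  moreover have "avg \<phi> a m \<le> (\<phi> a + \<phi> m) / 2" "avg \<phi> m b \<le> (\<phi> m + \<phi> b) / 2"
    using avg_le_chord[OF mono_slope_subinterval[OF \<phi>]] m by auto
  ultimately show ?thesis unfolding m_def by simp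
qed

lemma avg_minus_moment_ge:
  assumes \<phi>: "mono_slope \<phi> \<phi>' a b" and ab: "a < b"
  shows "\<phi> a + \<phi>' a * (b - a) / 3 \<le> avg \<phi> a b - moment \<phi> a b"
proof -
  define L where "L = b - a"
  have L: "L > 0" using ab by (simp add: L_def)
  define I1 where "I1 = integral {a..b} \<phi>"
  define I2 where "I2 = integral {a..b} (\<lambda>s. (s - (a + b) / 2) * \<phi> s)"
  have "((\<lambda>s. L/2 * \<phi> s - (s - (a + b) / 2) * \<phi> s) has_integral (L/2 * I1 - I2)) {a..b}"
    unfolding I1_def I2_def using mono_slope_integrable[OF \<phi>] mono_slope_integrable_weighted[OF \<phi>]
    by (intro has_integral_diff has_integral_mult_right) auto
  moreover have "(\<lambda>s. L/2 * \<phi> s - (s - (a + b) / 2) * \<phi> s) = (\<lambda>s. \<phi> s * (b - s))"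
    by (rule ext) (simp add: L_def field_simps)
  ultimately have int: "((\<lambda>s. \<phi> s * (b - s)) has_integral (L/2 * I1 - I2)) {a..b}" by simp
  define G where "G = (\<lambda>s. \<phi> a * (b * s - s^2 / 2) + \<phi>' a * (L * (s - a)^2 / 2 - (s - a)^3 / 3))"
  have "((\<lambda>s. (\<phi> a + \<phi>' a * (s - a)) * (b - s)) has_integral (G b - G a)) {a..b}"
    unfolding G_def using ab
    by (intro has_integral_real_FTC)
       (auto intro!: derivative_eq_intros simp: power2_eq_square power3_eq_cube L_def field_simps)
  moreover have "(\<phi> a + \<phi>' a * (s - a)) * (b - s) \<le> \<phi> s * (b - s)" if "s \<in> {a..b}" for s
  proof -
    have "\<phi>' a * (s - a) \<le> \<phi> s - \<phi> a" using mono_slope_lower[OF \<phi> order_refl] that by auto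
    then show ?thesis using that by (intro mult_right_mono) auto
  qed
  ultimately have "G b - G a \<le> L/2 * I1 - I2" using has_integral_le[OF _ int] by blast
  moreover have "G b - G a = \<phi> a * L^2 / 2 + \<phi>' a * L^3 / 6"
    unfolding G_def by (simp add: L_def power2_eq_square power3_eq_cube field_simps)
  ultimately have "2 / L^2 * (\<phi> a * L^2 / 2 + \<phi>' a * L^3 / 6) \<le> 2 / L^2 * (L/2 * I1 - I2)"
    using L by (intro mult_left_mono) auto
  moreover have "2 / L^2 * (L/2 * I1 - I2) = avg \<phi> a b - moment \<phi> a b"
    unfolding avg_def moment_def I1_def[symmetric] I2_def[symmetric] L_def[symmetric]
    using L by (simp add: power2_eq_square field_simps)
  moreover have "2 / L^2 * (\<phi> a * L^2 / 2 + \<phi>' a * L^3 / 6) = \<phi> a + \<phi>' a * L / 3"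
    using L by (simp add: power2_eq_square power3_eq_cube field_simps)
  ultimately show ?thesis by (simp add: L_def)
qed

lemma moment_le_avg:
  assumes ab: "a < b" and cont: "continuous_on {a..b} \<phi>" and nonneg: "\<And>s. s \<in> {a..b} \<Longrightarrow> 0 \<le> \<phi> s"
  shows "moment \<phi> a b \<le> avg \<phi> a b"
proof -
  define L where "L = b - a"
  have L: "L > 0" using ab by (simp add: L_def)
  have "integral {a..b} (\<lambda>s. (s - (a + b) / 2) * \<phi> s) \<le> integral {a..b} (\<lambda>s. L/2 * \<phi> s)"
  proof (rule integral_le)
    show "(\<lambda>s. (s - (a + b) / 2) * \<phi> s) integrable_on {a..b}" "(\<lambda>s. L/2 * \<phi> s) integrable_on {a..b}"
      using cont by (auto intro!: integrable_continuous_interval continuous_intros)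
    fix s assume s: "s \<in> {a..b}"
    then have "s - (a + b) / 2 \<le> L/2" by (auto simp: L_def field_simps)
    then show "(s - (a + b) / 2) * \<phi> s \<le> L/2 * \<phi> s" using nonneg[OF s] by (intro mult_right_mono) auto
  qed
  then have "moment \<phi> a b \<le> 2 / L^2 * (L/2 * integral {a..b} \<phi>)"
    unfolding moment_def L_def[symmetric] using L by (intro mult_left_mono) auto
  also have "\<dots> = avg \<phi> a b" unfolding avg_def L_def[symmetric] using L by (simp add: power2_eq_square field_simps)
  finally show ?thesis .
qed

definition pos_incr_convex :: "(real \<Rightarrow> real) \<Rightarrow> (real \<Rightarrow> real) \<Rightarrow> real \<Rightarrow> real \<Rightarrow> bool" where
  "pos_incr_convex \<phi> \<phi>' a b \<longleftrightarrow> mono_slope \<phi> \<phi>' a b \<and> 0 < \<phi> a \<and> 0 < \<phi>' a"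

lemma pos_incr_convex_slope_pos: "pos_incr_convex \<phi> \<phi>' a b \<Longrightarrow> a \<le> x \<Longrightarrow> x \<le> b \<Longrightarrow> 0 < \<phi>' x"
  unfolding pos_incr_convex_def using mono_slope_slope_mono[of \<phi> \<phi>' a b a x] by auto

lemma pos_incr_convex_mono:
  assumes "pos_incr_convex \<phi> \<phi>' a b" "a \<le> x" "x \<le> y" "y \<le> b"
  shows "\<phi> x \<le> \<phi> y"
proof -
  have "0 \<le> \<phi>' x * (y - x)" using pos_incr_convex_slope_pos[OF assms(1), of x] assms by simp
  also have "\<dots> \<le> \<phi> y - \<phi> x" using assms mono_slope_lower unfolding pos_incr_convex_def by blast
  finally show ?thesis by simp
qed

lemma pos_incr_convex_pos: "pos_incr_convex \<phi> \<phi>' a b \<Longrightarrow> a \<le> x \<Longrightarrow> x \<le> b \<Longrightarrow> 0 < \<phi> x"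
  using pos_incr_convex_mono[of \<phi> \<phi>' a b a x] unfolding pos_incr_convex_def by force

lemma moment_step_ge:
  assumes \<phi>: "mono_slope \<phi> \<phi>' x1 x3" and x: "x1 < x2" "x2 < x3" and slope: "0 \<le> \<phi>' x1"
    and p: "0 \<le> p" "p \<le> 1" and r: "r = (x3 - x2) / (x2 - x1)"
  shows "\<phi>' x1 * (x2 - x1) * (1/2 + r/3 + 1 / (6 * r))
    \<le> (avg \<phi> x2 x3 + moment \<phi> x1 x2 / (r * (1 + r)) - p * moment \<phi> x2 x3)
       - (avg \<phi> x1 x2 - moment \<phi> x1 x2 / (1 + r))"
proof -
  define P where "P = \<phi>' x1 * (x2 - x1)"
  have r_pos: "r > 0" using x r by simp
  have \<phi>12: "mono_slope \<phi> \<phi>' x1 x2" and \<phi>23: "mono_slope \<phi> \<phi>' x2 x3"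
    using mono_slope_subinterval[OF \<phi>] x by auto
  have slope2: "\<phi>' x1 \<le> \<phi>' x2" using mono_slope_slope_mono[OF \<phi>] x by auto
  have "moment \<phi> x1 x2 / (r * (1 + r)) + moment \<phi> x1 x2 / (1 + r) = moment \<phi> x1 x2 / r"
    using r_pos by (simp add: add_divide_distrib[symmetric] divide_simps) (simp add: algebra_simps)
  moreover have "P / (6 * r) \<le> moment \<phi> x1 x2 / r"
  proof -
    have "P / 6 \<le> moment \<phi> x1 x2" using moment_bounds(1)[OF \<phi>12 x(1)] by (simp add: P_def)
    then have "P / 6 / r \<le> moment \<phi> x1 x2 / r" using r_pos by (intro divide_right_mono) auto
    then show ?thesis by simp
  qed
  moreover have "p * moment \<phi> x2 x3 \<le> moment \<phi> x2 x3"
    using moment_nonneg[OF \<phi>23 x(2)] slope slope2 p by (simp add: mult_left_le_one_le)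
  moreover have "\<phi> x2 + P * r / 3 \<le> avg \<phi> x2 x3 - moment \<phi> x2 x3"
  proof -
    have "P * r = \<phi>' x1 * (x3 - x2)" unfolding r P_def using x by (simp add: field_simps)
    also have "\<dots> \<le> \<phi>' x2 * (x3 - x2)" using slope2 x by (intro mult_right_mono) auto
    finally show ?thesis using avg_minus_moment_ge[OF \<phi>23 x(2)] by linarith
  qed
  moreover have "avg \<phi> x1 x2 \<le> \<phi> x2 - P / 2"
    using avg_le_chord[OF \<phi>12 x(1)] mono_slope_lower[OF \<phi>12 order_refl, of x2] x
    by (simp add: P_def)
  moreover have "P * (1/2 + r/3 + 1 / (6 * r)) = P / 2 + P * r / 3 + P / (6 * r)"
    by (simp add: field_simps)
  ultimately show ?thesis unfolding P_def[symmetric] by linarith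
qed

section \<open>The kernel functional on a mesh\<close>

lemma ratio_sum_gt: "0 < (r::real) \<Longrightarrow> 5/6 < 1/2 + r/3 + 1 / (6 * r)"
proof -
  assume r: "0 < r"
  have "0 < 2 * (r - 1/2)^2 + 1/2" by (simp add: add_nonneg_pos)
  then have "5 * r < 3 * r + 2 * r^2 + 1" by (simp add: power2_eq_square algebra_simps)
  then show ?thesis using r by (simp add: field_simps power2_eq_square)
qed

lemma ratio_ge_bounds:
  fixes r :: real
  assumes "385/1000 \<le> r"
  shows "1/5 < r^2 * (1 + r)" and "1/2 \<le> r * (1 + r)"
proof -
  have "(385/1000::real)^2 * (1 + 385/1000) \<le> r^2 * (1 + r)"
    using assms by (intro mult_mono power_mono) auto
  moreover have "1/5 < (385/1000::real)^2 * (1 + 385/1000)" by (simp add: power2_eq_square)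
  ultimately show "1/5 < r^2 * (1 + r)" by linarith
  have "(385/1000::real) * (1 + 385/1000) \<le> r * (1 + r)"
    using assms by (intro mult_mono) auto
  then show "1/2 \<le> r * (1 + r)" by simp
qed

lemma ratio_eq: "2 \<le> k \<Longrightarrow> ratio t k = (t k - t (k - 1)) / (t (k - 1) - t (k - 2))"
  unfolding ratio_def tau_def by (simp add: numeral_2_eq_2 diff_diff_left)

definition prev_moment :: "(nat \<Rightarrow> real) \<Rightarrow> (real \<Rightarrow> real) \<Rightarrow> nat \<Rightarrow> real" where
  "prev_moment t \<phi> k =
    (if k = 1 then 0 else moment \<phi> (t (k - 2)) (t (k - 1)) / (ratio t k * (1 + ratio t k)))"

text \<open>\<^term>\<open>kern t (varpi \<alpha> t n) k\<close> is A^(n)_(n-k) for 1 \<le> k \<le> n - 1 (lemma \<open>Akern_eq_kern\<close>),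
  with \<^const>\<open>avg\<close> and \<^const>\<open>moment\<close> in the roles of a and zeta.\<close>

definition kern :: "(nat \<Rightarrow> real) \<Rightarrow> (real \<Rightarrow> real) \<Rightarrow> nat \<Rightarrow> real" where
  "kern t \<phi> k = avg \<phi> (t (k - 1)) (t k) + prev_moment t \<phi> k
     - moment \<phi> (t (k - 1)) (t k) / (1 + ratio t (k + 1))"

text \<open>The estimates only need step ratios above \<open>0.385\<close>, a lower bound for \<^term>\<open>rstar \<alpha>\<close>
  (lemma \<open>rstar_gt\<close>).\<close>

locale mesh =
  fixes t :: "nat \<Rightarrow> real" and N :: nat
  assumes mesh_step: "\<And>k. 1 \<le> k \<Longrightarrow> k \<le> N \<Longrightarrow> t (k - 1) < t k"
    and mesh_ratio: "\<And>k. 2 \<le> k \<Longrightarrow> k \<le> N \<Longrightarrow> 385/1000 \<le> ratio t k"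
begin

lemma mesh_less: "i < j \<Longrightarrow> j \<le> N \<Longrightarrow> t i < t j"
proof (induction j)
  case (Suc j)
  then have "t j < t (Suc j)" using mesh_step[of "Suc j"] by simp
  then show ?case using Suc by (cases "i = j") auto
qed simp

lemma mesh_le: "i \<le> j \<Longrightarrow> j \<le> N \<Longrightarrow> t i \<le> t j"
  using mesh_less[of i j] by (cases "i = j") auto

lemma ratio_pos: "2 \<le> k \<Longrightarrow> k \<le> N \<Longrightarrow> 0 < ratio t k"
  using mesh_ratio[of k] by simp

lemma prev_moment_diff:
  assumes "continuous_on {t 0..t K} f" "continuous_on {t 0..t K} g" "k \<le> K + 1" "K \<le> N"
  shows "prev_moment t (\<lambda>s. f s - g s) k = prev_moment t f k - prev_moment t g k"
proof -
  have "{t (k - 2)..t (k - 1)} \<subseteq> {t 0..t K}"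
    using mesh_le[of 0 "k - 2"] mesh_le[of "k - 1" K] assms by auto
  then have "continuous_on {t (k - 2)..t (k - 1)} f" "continuous_on {t (k - 2)..t (k - 1)} g"
    using assms continuous_on_subset by blast+
  then show ?thesis unfolding prev_moment_def by (simp add: moment_diff diff_divide_distrib)
qed

lemma kern_diff:
  assumes "continuous_on {t 0..t K} f" "continuous_on {t 0..t K} g" "k \<le> K" "K \<le> N"
  shows "kern t (\<lambda>s. f s - g s) k = kern t f k - kern t g k"
proof -
  have "{t (k - 1)..t k} \<subseteq> {t 0..t K}" using mesh_le[of 0 "k - 1"] mesh_le[of k K] assms by auto
  then have f: "continuous_on {t (k - 1)..t k} f" and g: "continuous_on {t (k - 1)..t k} g"
    using assms continuous_on_subset by blast+
  have "avg (\<lambda>s. f s - g s) (t (k - 1)) (t k) = avg f (t (k - 1)) (t k) - avg g (t (k - 1)) (t k)"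
    using f g by (intro avg_diff integrable_continuous_interval)
  moreover have "moment (\<lambda>s. f s - g s) (t (k - 1)) (t k) = moment f (t (k - 1)) (t k) - moment g (t (k - 1)) (t k)"
    using f g by (rule moment_diff)
  moreover have "prev_moment t (\<lambda>s. f s - g s) k = prev_moment t f k - prev_moment t g k"
    using assms by (intro prev_moment_diff) auto
  ultimately show ?thesis unfolding kern_def by (simp add: diff_divide_distrib)
qed

context
  fixes \<phi> \<phi>' :: "real \<Rightarrow> real" and K :: nat
  assumes \<phi>: "pos_incr_convex \<phi> \<phi>' (t 0) (t K)" and K: "K \<le> N"
begin

lemma mono_slope_mesh: "i \<le> j \<Longrightarrow> j \<le> K \<Longrightarrow> mono_slope \<phi> \<phi>' (t i) (t j)"
  using \<phi> mesh_le[of 0 i] mesh_le[of j K] K unfolding pos_incr_convex_def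
  by (auto intro: mono_slope_subinterval)

lemma pos_at_mesh: "i \<le> K \<Longrightarrow> 0 < \<phi> (t i)"
  using pos_incr_convex_pos[OF \<phi>] mesh_le[of 0 i] mesh_le[of i K] K by simp

lemma slope_pos_at_mesh: "i \<le> K \<Longrightarrow> 0 < \<phi>' (t i)"
  using pos_incr_convex_slope_pos[OF \<phi>] mesh_le[of 0 i] mesh_le[of i K] K by simp

lemma prev_moment_nonneg:
  assumes "1 \<le> k" "k \<le> K + 1" "k \<le> N"
  shows "0 \<le> prev_moment t \<phi> k"
proof (cases "k = 1")
  case False
  then have k: "2 \<le> k" using assms by simp
  have x: "t (k - 2) < t (k - 1)" using mesh_step[of "k - 1"] k assms by (simp add: numeral_2_eq_2)
  have "k - 2 \<le> K" "k - 1 \<le> K" using assms by arith+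
  then have "0 \<le> moment \<phi> (t (k - 2)) (t (k - 1))"
    using moment_nonneg[OF mono_slope_mesh x] slope_pos_at_mesh[of "k - 2"] by (simp add: less_imp_le)
  then show ?thesis using ratio_pos[of k] k assms by (simp add: prev_moment_def)
qed (simp add: prev_moment_def)

lemma prev_moment_lt_slope:
  assumes k: "1 \<le> k" "k \<le> K"
  shows "prev_moment t \<phi> k < 5/6 * (\<phi>' (t (k - 1)) * (t k - t (k - 1)))"
proof -
  define P where "P = \<phi>' (t (k - 1)) * (t k - t (k - 1))"
  have P: "0 < P" unfolding P_def using slope_pos_at_mesh[of "k - 1"] mesh_step[of k] k K by simp
  show ?thesis
  proof (cases "k = 1")
    case False
    then have k2: "2 \<le> k" using k by simp
    define r where "r = ratio t k"
    have r: "385/1000 \<le> r" using mesh_ratio[of k] k2 k K by (simp add: r_def)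
    have x: "t (k - 2) < t (k - 1)" "t (k - 1) < t k"
      using mesh_step[of "k - 1"] mesh_step[of k] k2 k K by (simp_all add: numeral_2_eq_2)
    have "moment \<phi> (t (k - 2)) (t (k - 1)) \<le> \<phi>' (t (k - 1)) * (t (k - 1) - t (k - 2)) / 6"
      using moment_bounds(2)[OF mono_slope_mesh[of "k - 2" "k - 1"] x(1)] k by simp
    also have "t (k - 1) - t (k - 2) = (t k - t (k - 1)) / r"
      using ratio_eq[OF k2] x by (simp add: r_def)
    finally have "moment \<phi> (t (k - 2)) (t (k - 1)) \<le> P / (6 * r)" by (simp add: P_def)
    then have "moment \<phi> (t (k - 2)) (t (k - 1)) / (r * (1 + r)) \<le> P / (6 * r) / (r * (1 + r))"
      using r by (intro divide_right_mono) auto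
    then have "prev_moment t \<phi> k \<le> P / (6 * r) / (r * (1 + r))"
      using False by (simp add: prev_moment_def r_def[symmetric])
    also have "\<dots> = P / (6 * (r^2 * (1 + r)))" by (simp add: power2_eq_square mult.assoc)
    also have "\<dots> < P / (6 * (1/5))"
      using P ratio_ge_bounds(1)[OF r] by (intro divide_strict_left_mono) (auto simp: algebra_simps)
    finally show ?thesis by (simp add: P_def)
  qed (use P in \<open>simp add: prev_moment_def P_def\<close>)
qed

lemma prev_moment_le_value:
  assumes k: "1 \<le> k" "k \<le> K"
  shows "prev_moment t \<phi> k \<le> 2 * \<phi> (t (k - 1))"
proof (cases "k = 1")
  case False
  then have k2: "2 \<le> k" using k by simp
  define r where "r = ratio t k"
  define M where "M = moment \<phi> (t (k - 2)) (t (k - 1))"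
  have r: "1/2 \<le> r * (1 + r)" using ratio_ge_bounds(2) mesh_ratio[of k] k2 k K by (simp add: r_def)
  have x: "t (k - 2) < t (k - 1)" using mesh_step[of "k - 1"] k2 k K by (simp add: numeral_2_eq_2)
  have \<phi>': "mono_slope \<phi> \<phi>' (t (k - 2)) (t (k - 1))" using mono_slope_mesh k by simp
  have "k - 2 \<le> K" using k by arith
  then have "0 \<le> M" unfolding M_def
    using moment_nonneg[OF \<phi>' x] slope_pos_at_mesh[of "k - 2"] by simp
  have "M \<le> avg \<phi> (t (k - 2)) (t (k - 1))" unfolding M_def
  proof (rule moment_le_avg[OF x mono_slope_continuous[OF \<phi>']])
    fix s assume "s \<in> {t (k - 2)..t (k - 1)}"
    then show "0 \<le> \<phi> s" using pos_incr_convex_pos[OF \<phi>, of s] mesh_le[of 0 "k - 2"] mesh_le[of "k - 1" K] k K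
      by (simp add: less_imp_le)
  qed
  also have "\<dots> \<le> (\<phi> (t (k - 2)) + \<phi> (t (k - 1))) / 2" using avg_le_chord[OF \<phi>' x] .
  also have "\<dots> \<le> \<phi> (t (k - 1))"
    using pos_incr_convex_mono[OF \<phi>] mesh_le[of 0 "k - 2"] mesh_le[of "k - 1" K] x k K by fastforce
  finally have "M \<le> \<phi> (t (k - 1))" .
  moreover have "M / (r * (1 + r)) \<le> M / (1/2)"
    using \<open>0 \<le> M\<close> r by (intro divide_left_mono) auto
  ultimately show ?thesis using False unfolding prev_moment_def r_def[symmetric] M_def[symmetric] by simp
qed (use pos_at_mesh[of 0] in \<open>simp add: prev_moment_def less_imp_le\<close>)

lemma avg_add_prev_moment_le:
  assumes k: "1 \<le> k" "k \<le> K"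
  shows "avg \<phi> (t (k - 1)) (t k) + prev_moment t \<phi> k \<le> 5/4 * \<phi> (t k)"
proof -
  have x: "t (k - 1) < t k" using mesh_step[of k] k K by simp
  have \<phi>': "mono_slope \<phi> \<phi>' (t (k - 1)) (t k)" using mono_slope_mesh k by simp
  have slope_le: "\<phi>' (t (k - 1)) * (t k - t (k - 1)) \<le> \<phi> (t k) - \<phi> (t (k - 1))"
    using mono_slope_lower[OF \<phi>' order_refl] x by simp
  have "prev_moment t \<phi> k < 5/6 * (\<phi> (t k) - \<phi> (t (k - 1)))"
    using order.strict_trans2[OF prev_moment_lt_slope[OF k] mult_left_mono[OF slope_le]] by simp
  moreover have "prev_moment t \<phi> k \<le> 2 * \<phi> (t (k - 1))" using prev_moment_le_value[OF k] .
  moreover have "avg \<phi> (t (k - 1)) (t k) \<le> (\<phi> (t (k - 1)) + \<phi> (t k)) / 2"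
    using avg_le_chord[OF \<phi>' x] .
  moreover have "0 < \<phi> (t (k - 1))" using pos_at_mesh k by simp
  \<comment> \<open>the bound by the slope wins if \<open>\<phi> (t k) \<le> 4 * \<phi> (t (k - 1))\<close>, the bound by the value otherwise\<close>
  ultimately show ?thesis
    by (cases "4 * \<phi> (t (k - 1)) \<le> \<phi> (t k)") argo+
qed

lemma kern_le_avg_add_prev_moment:
  assumes k: "1 \<le> k" "k \<le> K" "k < N"
  shows "kern t \<phi> k \<le> avg \<phi> (t (k - 1)) (t k) + prev_moment t \<phi> k"
proof -
  have "t (k - 1) < t k" using mesh_step[of k] k by simp
  then have "0 \<le> moment \<phi> (t (k - 1)) (t k)"
    using moment_nonneg[OF mono_slope_mesh[of "k - 1" k]] slope_pos_at_mesh[of "k - 1"] k by (simp add: less_imp_le)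
  moreover have "0 < 1 + ratio t (k + 1)" using ratio_pos[of "k + 1"] k by simp
  ultimately show ?thesis unfolding kern_def by simp
qed

lemma kern_pos:
  assumes k: "1 \<le> k" "k \<le> K" "k < N"
  shows "0 < kern t \<phi> k"
proof -
  have x: "t (k - 1) < t k" using mesh_step[of k] k by simp
  have \<phi>': "mono_slope \<phi> \<phi>' (t (k - 1)) (t k)" using mono_slope_mesh k by simp
  have "0 \<le> moment \<phi> (t (k - 1)) (t k)"
    using moment_nonneg[OF \<phi>' x] slope_pos_at_mesh[of "k - 1"] k by (simp add: less_imp_le)
  moreover have "1 \<le> 1 + ratio t (k + 1)" using ratio_pos[of "k + 1"] k by simp
  ultimately have "moment \<phi> (t (k - 1)) (t k) / (1 + ratio t (k + 1)) \<le> moment \<phi> (t (k - 1)) (t k)"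
    using divide_left_mono[of 1 "1 + ratio t (k + 1)" "moment \<phi> (t (k - 1)) (t k)"] by simp
  moreover have "\<phi> (t (k - 1)) + \<phi>' (t (k - 1)) * (t k - t (k - 1)) / 3
      \<le> avg \<phi> (t (k - 1)) (t k) - moment \<phi> (t (k - 1)) (t k)"
    using avg_minus_moment_ge[OF \<phi>' x] .
  moreover have "0 < \<phi> (t (k - 1))" "0 < \<phi>' (t (k - 1))" using pos_at_mesh slope_pos_at_mesh k by auto
  moreover have "0 \<le> prev_moment t \<phi> k" using prev_moment_nonneg k by simp
  ultimately show ?thesis unfolding kern_def using x by (smt (verit) divide_nonneg_pos mult_pos_pos)
qed

lemma kern_strict_mono:
  assumes k: "1 \<le> k" "k < K" "k + 1 < N"
  shows "kern t \<phi> k < kern t \<phi> (k + 1)"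
proof -
  define r where "r = ratio t (k + 1)"
  define p where "p = 1 / (1 + ratio t (k + 2))"
  define P where "P = \<phi>' (t (k - 1)) * (t k - t (k - 1))"
  have x: "t (k - 1) < t k" "t k < t (k + 1)" using mesh_step[of k] mesh_step[of "k + 1"] k K by auto
  have r: "r = (t (k + 1) - t k) / (t k - t (k - 1))" using ratio_eq[of "k + 1" t] k by (simp add: r_def)
  have "0 < r" using ratio_pos[of "k + 1"] k by (simp add: r_def)
  have p: "0 \<le> p" "p \<le> 1" using ratio_pos[of "k + 2"] k by (auto simp: p_def)
  have P: "0 < P" unfolding P_def using slope_pos_at_mesh[of "k - 1"] x k by simp
  have "kern t \<phi> (k + 1) - (kern t \<phi> k - prev_moment t \<phi> k)
      = (avg \<phi> (t k) (t (k + 1)) + moment \<phi> (t (k - 1)) (t k) / (r * (1 + r)) - p * moment \<phi> (t k) (t (k + 1)))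
        - (avg \<phi> (t (k - 1)) (t k) - moment \<phi> (t (k - 1)) (t k) / (1 + r))"
    unfolding kern_def prev_moment_def r_def p_def using k by (simp add: numeral_2_eq_2)
  also have "\<dots> \<ge> P * (1/2 + r/3 + 1 / (6 * r))" unfolding P_def
    using moment_step_ge[OF mono_slope_mesh[of "k - 1" "k + 1"] x _ p r] slope_pos_at_mesh[of "k - 1"] k
    by (simp add: less_imp_le)
  finally have "P * (1/2 + r/3 + 1 / (6 * r)) \<le> kern t \<phi> (k + 1) - kern t \<phi> k + prev_moment t \<phi> k"
    by simp
  moreover have "5/6 * P < P * (1/2 + r/3 + 1 / (6 * r))" using ratio_sum_gt[OF \<open>0 < r\<close>] P by simp
  moreover have "prev_moment t \<phi> k < 5/6 * P" unfolding P_def using prev_moment_lt_slope k by simp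
  ultimately show ?thesis by linarith
qed

lemma kern_lt_top:
  assumes K1: "1 \<le> K" and KN: "K < N"
  shows "kern t \<phi> K < 2 * (\<phi> (t K) + prev_moment t \<phi> (K + 1))"
proof -
  have x: "t (K - 1) < t K" using mesh_step[of K] K1 KN by simp
  have \<phi>': "mono_slope \<phi> \<phi>' (t (K - 1)) (t K)" using mono_slope_mesh by simp
  have slope_le: "\<phi>' (t (K - 1)) * (t K - t (K - 1)) \<le> \<phi> (t K) - \<phi> (t (K - 1))"
    using mono_slope_lower[OF \<phi>' order_refl] x by simp
  have "prev_moment t \<phi> K < 5/6 * (\<phi> (t K) - \<phi> (t (K - 1)))"
    using order.strict_trans2[OF prev_moment_lt_slope[OF K1 order_refl] mult_left_mono[OF slope_le]] by simp
  moreover have "avg \<phi> (t (K - 1)) (t K) \<le> (\<phi> (t (K - 1)) + \<phi> (t K)) / 2"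
    using avg_le_chord[OF \<phi>' x] .
  moreover have "0 < \<phi> (t (K - 1))" "0 < \<phi> (t K)" using pos_at_mesh by simp_all
  moreover have "0 \<le> prev_moment t \<phi> (K + 1)" using prev_moment_nonneg KN by simp
  ultimately show ?thesis using kern_le_avg_add_prev_moment[OF K1 order_refl KN] by argo
qed

end

end

section \<open>The reflected kernel\<close>

definition kernel_slope :: "real \<Rightarrow> real \<Rightarrow> real \<Rightarrow> real" where
  "kernel_slope \<alpha> c s = \<alpha> * (c - s) powr (- \<alpha> - 1) / Gamma (1 - \<alpha>)"

lemma omega_reflect: "omega (1 - \<alpha>) (c - s) = (c - s) powr (- \<alpha>) / Gamma (1 - \<alpha>)"
  by (simp add: omega_def)

lemma has_real_derivative_powr_reflect:
  fixes c s e :: real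
  assumes "s < c"
  shows "((\<lambda>s. (c - s) powr e) has_real_derivative - e * (c - s) powr (e - 1)) (at s)"
proof -
  have "((\<lambda>s. (c - s) powr e) has_real_derivative e * (c - s) powr (e - of_nat 1) * (-1)) (at s)"
    using assms by (intro DERIV_fun_powr) (auto intro!: derivative_eq_intros)
  then show ?thesis by simp
qed

lemma omega_reflect_has_real_derivative:
  "s < c \<Longrightarrow> ((\<lambda>s. omega (1 - \<alpha>) (c - s)) has_real_derivative kernel_slope \<alpha> c s) (at s)"
  unfolding omega_reflect kernel_slope_def
  using DERIV_cdivide[OF has_real_derivative_powr_reflect, of s c "- \<alpha>" "Gamma (1 - \<alpha>)"]
  by (simp add: algebra_simps)

lemma kernel_slope_has_real_derivative:
  assumes "s < c"
  shows "(kernel_slope \<alpha> c has_real_derivative \<alpha> * (\<alpha> + 1) * (c - s) powr (- \<alpha> - 2) / Gamma (1 - \<alpha>)) (at s)"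
proof -
  have "((\<lambda>s. \<alpha> * (c - s) powr (- \<alpha> - 1)) has_real_derivative \<alpha> * (\<alpha> + 1) * (c - s) powr (- \<alpha> - 2)) (at s)"
    using DERIV_cmult[OF has_real_derivative_powr_reflect[OF assms, of "- \<alpha> - 1"], of \<alpha>]
    by (simp add: algebra_simps)
  from DERIV_cdivide[OF this, of "Gamma (1 - \<alpha>)"] show ?thesis
    unfolding kernel_slope_def[abs_def] by simp
qed

lemma kernel_slope_mono:
  assumes "x \<le> y" "y < c" "0 < \<alpha>" "\<alpha> < 1"
  shows "kernel_slope \<alpha> c x \<le> kernel_slope \<alpha> c y"
proof -
  have "(c - x) powr (- \<alpha> - 1) \<le> (c - y) powr (- \<alpha> - 1)"
    using assms by (intro powr_mono2') auto
  then show ?thesis unfolding kernel_slope_def using assms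
    by (intro divide_right_mono mult_left_mono) auto
qed

lemma omega_reflect_strict_antimono:
  assumes "s < c1" "c1 < c2" "0 < \<alpha>" "\<alpha> < 1"
  shows "omega (1 - \<alpha>) (c2 - s) < omega (1 - \<alpha>) (c1 - s)"
  unfolding omega_reflect using assms
  by (intro divide_strict_right_mono powr_less_mono2_neg) auto

lemma kernel_slope_strict_antimono:
  assumes "s < c1" "c1 < c2" "0 < \<alpha>" "\<alpha> < 1"
  shows "kernel_slope \<alpha> c2 s < kernel_slope \<alpha> c1 s"
  unfolding kernel_slope_def using assms
  by (intro divide_strict_right_mono mult_strict_left_mono powr_less_mono2_neg) auto

lemma pos_incr_convex_omega_reflect:
  assumes "a \<le> b" "b < c" "0 < \<alpha>" "\<alpha> < 1"
  shows "pos_incr_convex (\<lambda>s. omega (1 - \<alpha>) (c - s)) (kernel_slope \<alpha> c) a b"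
  unfolding pos_incr_convex_def
proof (intro conjI)
  show "mono_slope (\<lambda>s. omega (1 - \<alpha>) (c - s)) (kernel_slope \<alpha> c) a b"
    using assms by (intro mono_slopeI omega_reflect_has_real_derivative kernel_slope_mono) auto
  show "0 < omega (1 - \<alpha>) (c - a)" "0 < kernel_slope \<alpha> c a"
    using assms by (auto simp: omega_reflect kernel_slope_def)
qed

lemma pos_incr_convex_omega_reflect_diff:
  assumes "a \<le> b" "b < c1" "c1 < c2" "0 < \<alpha>" "\<alpha> < 1"
  shows "pos_incr_convex (\<lambda>s. omega (1 - \<alpha>) (c1 - s) - omega (1 - \<alpha>) (c2 - s))
    (\<lambda>s. kernel_slope \<alpha> c1 s - kernel_slope \<alpha> c2 s) a b"
  unfolding pos_incr_convex_def
proof (intro conjI mono_slopeI)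
  fix x assume "a \<le> x" "x \<le> b"
  then show "((\<lambda>s. omega (1 - \<alpha>) (c1 - s) - omega (1 - \<alpha>) (c2 - s)) has_real_derivative
      kernel_slope \<alpha> c1 x - kernel_slope \<alpha> c2 x) (at x)"
    using assms by (intro DERIV_diff omega_reflect_has_real_derivative) auto
next
  fix x y assume xy: "a \<le> x" "x \<le> y" "y \<le> b"
  define D where "D c z = \<alpha> * (\<alpha> + 1) * (c - z) powr (- \<alpha> - 2) / Gamma (1 - \<alpha>)" for c z
  have deriv: "((\<lambda>s. kernel_slope \<alpha> c1 s - kernel_slope \<alpha> c2 s) has_real_derivative D c1 z - D c2 z) (at z)"
    if "z \<le> b" for z
    unfolding D_def using that assms by (intro DERIV_diff kernel_slope_has_real_derivative) auto
  show "kernel_slope \<alpha> c1 x - kernel_slope \<alpha> c2 x \<le> kernel_slope \<alpha> c1 y - kernel_slope \<alpha> c2 y"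
  proof (rule DERIV_nonneg_imp_increasing_open[OF xy(2)])
    fix z assume z: "x < z" "z < y"
    have "D c2 z \<le> D c1 z"
      unfolding D_def using z xy assms by (intro divide_right_mono mult_left_mono powr_mono2') auto
    then show "\<exists>d. ((\<lambda>s. kernel_slope \<alpha> c1 s - kernel_slope \<alpha> c2 s) has_real_derivative d) (at z) \<and> 0 \<le> d"
      using deriv[of z] z xy by auto
  next
    show "continuous_on {x..y} (\<lambda>s. kernel_slope \<alpha> c1 s - kernel_slope \<alpha> c2 s)"
    proof (intro continuous_at_imp_continuous_on ballI)
      fix z assume "z \<in> {x..y}"
      then show "isCont (\<lambda>s. kernel_slope \<alpha> c1 s - kernel_slope \<alpha> c2 s) z"
        using DERIV_isCont[OF deriv[of z]] xy by auto
    qed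
  qed
qed (use assms omega_reflect_strict_antimono kernel_slope_strict_antimono in auto)

lemma omega_scale_le:
  assumes "0 < x" "0 < \<mu>" "0 < \<alpha>" "\<alpha> < 1"
  shows "omega (1 - \<alpha>) (\<mu> * x) \<le> max 1 (1 / \<mu>) * omega (1 - \<alpha>) x"
proof -
  have "\<mu> powr (- \<alpha>) \<le> max 1 (1 / \<mu>)"
  proof (cases "1 \<le> \<mu>")
    case True
    then have "\<mu> powr (- \<alpha>) \<le> \<mu> powr 0" using assms by (intro powr_mono) auto
    then show ?thesis using True by simp
  next
    case False
    then have "\<mu> powr (- \<alpha>) = (1 / \<mu>) powr \<alpha>" using assms by (simp add: powr_minus_divide powr_divide)
    also have "\<dots> \<le> (1 / \<mu>) powr 1" using False assms by (intro powr_mono) auto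
    finally show ?thesis using assms by simp
  qed
  then have "\<mu> powr (- \<alpha>) * (x powr (- \<alpha>) / Gamma (1 - \<alpha>)) \<le> max 1 (1 / \<mu>) * (x powr (- \<alpha>) / Gamma (1 - \<alpha>))"
    using assms by (intro mult_right_mono) auto
  then show ?thesis using assms by (simp add: omega_def powr_mult)
qed

lemma omega_reflect_has_integral:
  assumes "a < c" "0 < \<alpha>" "\<alpha> < 1"
  shows "((\<lambda>s. omega (1 - \<alpha>) (c - s)) has_integral (c - a) * omega (1 - \<alpha>) (c - a) / (1 - \<alpha>)) {a..c}"
proof -
  define G where "G = (\<lambda>s. - ((c - s) powr (1 - \<alpha>)) / ((1 - \<alpha>) * Gamma (1 - \<alpha>)))"
  have nz: "Gamma (1 - \<alpha>) \<noteq> 0" "(1 - \<alpha>) * Gamma (1 - \<alpha>) \<noteq> 0"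
    using Gamma_real_pos[of "1 - \<alpha>"] assms by (auto simp del: Gamma_real_pos)
  have "((\<lambda>s. omega (1 - \<alpha>) (c - s)) has_integral (G c - G a)) {a..c}"
  proof (rule fundamental_theorem_of_calculus_interior)
    show "continuous_on {a..c} G" unfolding G_def
      using assms nz by (intro continuous_intros continuous_on_powr') auto
  next
    fix x assume x: "x \<in> {a<..<c}"
    have "(G has_real_derivative (- (- (1 - \<alpha>) * (c - x) powr (1 - \<alpha> - 1))) / ((1 - \<alpha>) * Gamma (1 - \<alpha>))) (at x)"
      unfolding G_def using x by (intro DERIV_cdivide DERIV_minus has_real_derivative_powr_reflect) auto
    moreover have "(- (- (1 - \<alpha>) * (c - x) powr (1 - \<alpha> - 1))) / ((1 - \<alpha>) * Gamma (1 - \<alpha>)) = omega (1 - \<alpha>) (c - x)"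
      using nz assms by (simp add: omega_reflect field_simps)
    ultimately show "(G has_vector_derivative omega (1 - \<alpha>) (c - x)) (at x)"
      by (simp add: has_real_derivative_iff_has_vector_derivative)
  qed (use assms in simp)
  moreover have "G c - G a = (c - a) * omega (1 - \<alpha>) (c - a) / (1 - \<alpha>)"
  proof -
    have "(c - a) powr (1 - \<alpha>) = (c - a) * (c - a) powr (- \<alpha>)"
      using powr_add[of "c - a" 1 "- \<alpha>"] assms by simp
    then show ?thesis unfolding G_def omega_reflect using assms nz by (simp add: field_simps)
  qed
  ultimately show ?thesis by simp
qed

section \<open>The auxiliary kernels\<close>

lemma varpi_eq: "varpi \<alpha> t n = (\<lambda>s. omega (1 - \<alpha>) (t_shift \<alpha> t n - s))"
  by (simp add: varpi_def[abs_def])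

lemma zeta_eq_moment: "k \<le> n \<Longrightarrow> zeta \<alpha> t n (n - k) = moment (varpi \<alpha> t n) (t (k - 1)) (t k)"
  unfolding zeta_def Let_def moment_def tau_def by simp

locale kernel_mesh = mesh +
  fixes \<alpha> :: real
  assumes alpha: "0 < \<alpha>" "\<alpha> < 1"
begin

lemma t_shift_diff: "t_shift \<alpha> t n - t (n - 1) = (1 - \<alpha>/2) * (t n - t (n - 1))"
  by (simp add: t_shift_def algebra_simps)

lemma t_shift_bounds:
  assumes "1 \<le> n" "n \<le> N"
  shows "t (n - 1) < t_shift \<alpha> t n" "t_shift \<alpha> t n \<le> t n"
proof -
  have "0 < (1 - \<alpha>/2) * (t n - t (n - 1))" using mesh_step[OF assms] alpha by simp
  then show "t (n - 1) < t_shift \<alpha> t n" using t_shift_diff[of n] by simp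
  have "t n - t_shift \<alpha> t n = \<alpha>/2 * (t n - t (n - 1))" by (simp add: t_shift_def algebra_simps)
  moreover have "0 \<le> \<alpha>/2 * (t n - t (n - 1))" using mesh_step[OF assms] alpha by simp
  ultimately show "t_shift \<alpha> t n \<le> t n" by linarith
qed

lemma t_shift_strict_mono:
  assumes "2 \<le> n" "n \<le> N"
  shows "t_shift \<alpha> t (n - 1) < t_shift \<alpha> t n"
proof -
  have "1 \<le> n - 1" "n - 1 \<le> N" using assms by auto
  then show ?thesis using t_shift_bounds(2)[of "n - 1"] t_shift_bounds(1)[of n] assms by simp
qed

lemma pos_incr_convex_varpi:
  "1 \<le> n \<Longrightarrow> n \<le> N \<Longrightarrow>
    pos_incr_convex (varpi \<alpha> t n) (kernel_slope \<alpha> (t_shift \<alpha> t n)) (t 0) (t (n - 1))"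
  unfolding varpi_eq using t_shift_bounds(1)[of n] mesh_le[of 0 "n - 1"] alpha
  by (intro pos_incr_convex_omega_reflect) auto

lemma pos_incr_convex_varpi_diff:
  assumes "2 \<le> n" "n \<le> N"
  shows "pos_incr_convex (\<lambda>s. varpi \<alpha> t (n - 1) s - varpi \<alpha> t n s)
    (\<lambda>s. kernel_slope \<alpha> (t_shift \<alpha> t (n - 1)) s - kernel_slope \<alpha> (t_shift \<alpha> t n) s) (t 0) (t (n - 2))"
  unfolding varpi_eq using t_shift_bounds(1)[of "n - 1"] t_shift_strict_mono mesh_le[of 0 "n - 2"] alpha assms
  by (intro pos_incr_convex_omega_reflect_diff) (auto simp: numeral_2_eq_2)

lemma continuous_on_varpi:
  assumes "1 \<le> n" "n \<le> N" "m \<le> n - 1"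
  shows "continuous_on {t 0..t m} (varpi \<alpha> t n)"
proof -
  have "t m \<le> t (n - 1)" using mesh_le assms by simp
  then show ?thesis using pos_incr_convex_varpi[OF assms(1,2)] unfolding pos_incr_convex_def
    by (auto intro: mono_slope_continuous mono_slope_subinterval)
qed

lemma akern_eq_avg:
  assumes "1 \<le> k" "k < n" "n \<le> N"
  shows "akern \<alpha> t n (n - k) = avg (varpi \<alpha> t n) (t (k - 1)) (t k)"
proof -
  have "t k \<le> t (n - 1)" using mesh_le[of k "n - 1"] assms by simp
  then have "t k < t_shift \<alpha> t n" using t_shift_bounds(1)[of n] assms by simp
  then show ?thesis unfolding akern_def Let_def avg_def tau_def using assms by simp
qed

lemma Akern_eq_kern:
  assumes k: "1 \<le> k" "k < n" and n: "n \<le> N"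
  shows "Akern \<alpha> t n (n - k) = kern t (varpi \<alpha> t n) k"
proof -
  have j: "n - k \<noteq> 0" "n - (n - k) = k" using k by auto
  have a: "akern \<alpha> t n (n - k) = avg (varpi \<alpha> t n) (t (k - 1)) (t k)" using akern_eq_avg k n .
  have z: "zeta \<alpha> t n (n - k) = moment (varpi \<alpha> t n) (t (k - 1)) (t k)" using zeta_eq_moment k by simp
  show ?thesis
  proof (cases "k = 1")
    case True
    then show ?thesis unfolding Akern_def ahat_def kern_def prev_moment_def using j a z
      by (simp add: numeral_2_eq_2)
  next
    case False
    have "zeta \<alpha> t n (n - k + 1) = zeta \<alpha> t n (n - (k - 1))" using k by (simp add: Suc_diff_le)
    also have "\<dots> = moment (varpi \<alpha> t n) (t (k - 1 - 1)) (t (k - 1))" using k by (intro zeta_eq_moment) simp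
    finally have "zeta \<alpha> t n (n - k + 1) = moment (varpi \<alpha> t n) (t (k - 2)) (t (k - 1))"
      by (simp add: numeral_2_eq_2)
    moreover have "n - k \<noteq> n - 1" using False k by simp
    ultimately show ?thesis unfolding Akern_def ahat_def kern_def prev_moment_def Let_def
      using j a z False by (simp add: divide_inverse algebra_simps)
  qed
qed

lemma akern_0:
  assumes "1 \<le> n" "n \<le> N"
  shows "2 * (1 - \<alpha>) / (2 - \<alpha>) * akern \<alpha> t n 0 = varpi \<alpha> t n (t (n - 1))"
proof -
  define L where "L = t_shift \<alpha> t n - t (n - 1)"
  have L: "0 < L" using t_shift_bounds(1)[OF assms] by (simp add: L_def)
  have "L = (1 - \<alpha>/2) * tau t n" using t_shift_diff[of n] by (simp add: L_def tau_def)
  then have "tau t n = 2 * L / (2 - \<alpha>)" using alpha by (simp add: field_simps)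
  moreover have "integral {t (n - 1)..t_shift \<alpha> t n} (varpi \<alpha> t n) = L * omega (1 - \<alpha>) L / (1 - \<alpha>)"
    unfolding varpi_eq L_def using omega_reflect_has_integral t_shift_bounds(1)[OF assms] alpha
    by (intro integral_unique) auto
  ultimately have "akern \<alpha> t n 0 = (2 - \<alpha>) / (2 * L) * (L * omega (1 - \<alpha>) L / (1 - \<alpha>))"
    unfolding akern_def Let_def using t_shift_bounds(2)[OF assms] by (simp add: min_absorb2)
  moreover have "varpi \<alpha> t n (t (n - 1)) = omega (1 - \<alpha>) L" by (simp add: varpi_def L_def)
  moreover have "2 * (1 - \<alpha>) / (2 - \<alpha>) * ((2 - \<alpha>) / (2 * L) * (L * w / (1 - \<alpha>))) = w" for w
  proof -
    have "\<alpha> \<noteq> 2" "\<alpha> \<noteq> 1" "L \<noteq> 0" using L alpha by auto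
    then show ?thesis by simp
  qed
  ultimately show ?thesis by simp
qed

lemma Akern_0_eq:
  assumes "1 \<le> n" "n \<le> N"
  shows "Akern \<alpha> t n 0 = 2 * (varpi \<alpha> t n (t (n - 1)) + prev_moment t (varpi \<alpha> t n) n)"
proof (cases "n = 1")
  case False
  have "zeta \<alpha> t n 1 = moment (varpi \<alpha> t n) (t (n - 2)) (t (n - 1))"
    using zeta_eq_moment[of "n - 1" n] False assms by (simp add: numeral_2_eq_2)
  then show ?thesis unfolding Akern_def ahat_def prev_moment_def akern_0[OF assms]
    using False by (simp add: divide_inverse algebra_simps)
qed (use akern_0[of 1] assms in \<open>simp add: Akern_def ahat_def prev_moment_def\<close>)

lemma varpi_last_lt:
  assumes n: "2 \<le> n" "n \<le> N"
  shows "varpi \<alpha> t n (t (n - 1)) < 3 * varpi \<alpha> t (n - 1) (t (n - 2))"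
proof -
  define x where "x = t_shift \<alpha> t (n - 1) - t (n - 2)"
  define \<rho> where "\<rho> = ratio t n"
  have \<rho>: "385/1000 \<le> \<rho>" using mesh_ratio n by (simp add: \<rho>_def)
  have x: "0 < x" using t_shift_bounds(1)[of "n - 1"] n by (simp add: x_def numeral_2_eq_2)
  have "0 < t (n - 1) - t (n - 2)" using mesh_step[of "n - 1"] n by (simp add: numeral_2_eq_2)
  then have "t n - t (n - 1) = \<rho> * (t (n - 1) - t (n - 2))"
    using ratio_eq[OF n(1), of t] by (simp add: \<rho>_def)
  moreover have "x = (1 - \<alpha>/2) * (t (n - 1) - t (n - 2))"
    using t_shift_diff[of "n - 1"] by (simp add: x_def numeral_2_eq_2)
  ultimately have "t_shift \<alpha> t n - t (n - 1) = \<rho> * x" using t_shift_diff[of n] by simp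
  then have "varpi \<alpha> t n (t (n - 1)) \<le> max 1 (1 / \<rho>) * omega (1 - \<alpha>) x"
    using omega_scale_le[OF x _ alpha] \<rho> by (simp add: varpi_def)
  also have "\<dots> < 3 * omega (1 - \<alpha>) x"
    using \<rho> x alpha by (intro mult_strict_right_mono) (auto simp: omega_def field_simps)
  finally show ?thesis by (simp add: varpi_def x_def)
qed

lemma varpi_mid_le:
  assumes n: "2 \<le> n" "n \<le> N"
  shows "varpi \<alpha> t n ((t (n - 2) + t (n - 1)) / 2) \<le> 2 * varpi \<alpha> t n (t (n - 2))"
proof -
  define x where "x = t_shift \<alpha> t n - t (n - 2)"
  define \<mu> where "\<mu> = (t_shift \<alpha> t n - (t (n - 2) + t (n - 1)) / 2) / x"
  have steps: "t (n - 2) < t (n - 1)" "t (n - 1) < t_shift \<alpha> t n"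
    using mesh_step[of "n - 1"] t_shift_bounds(1)[of n] n by (simp_all add: numeral_2_eq_2)
  then have x: "0 < x" and \<mu>: "1/2 \<le> \<mu>" by (auto simp: x_def \<mu>_def field_simps)
  have "t_shift \<alpha> t n - (t (n - 2) + t (n - 1)) / 2 = \<mu> * x" using x by (simp add: \<mu>_def)
  then have "varpi \<alpha> t n ((t (n - 2) + t (n - 1)) / 2) \<le> max 1 (1 / \<mu>) * omega (1 - \<alpha>) x"
    using omega_scale_le[OF x _ alpha] \<mu> by (simp add: varpi_def)
  also have "\<dots> \<le> 2 * omega (1 - \<alpha>) x"
    using \<mu> x alpha by (intro mult_right_mono) (auto simp: omega_def field_simps)
  finally show ?thesis by (simp add: varpi_def x_def)
qed


lemma kern_level_diff:
  assumes "2 \<le> n" "n \<le> N" "k \<le> n - 2"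
  shows "kern t (varpi \<alpha> t (n - 1)) k - kern t (varpi \<alpha> t n) k
    = kern t (\<lambda>s. varpi \<alpha> t (n - 1) s - varpi \<alpha> t n s) k"
proof -
  have "continuous_on {t 0..t (n - 2)} (varpi \<alpha> t (n - 1))" "continuous_on {t 0..t (n - 2)} (varpi \<alpha> t n)"
    using continuous_on_varpi assms by simp_all
  from kern_diff[OF this] show ?thesis using assms by simp
qed

lemma prev_moment_level_mono:
  assumes "2 \<le> n" "n \<le> N"
  shows "0 \<le> prev_moment t (varpi \<alpha> t n) (n - 1)"
    and "prev_moment t (varpi \<alpha> t n) (n - 1) \<le> prev_moment t (varpi \<alpha> t (n - 1)) (n - 1)"
proof -
  have "pos_incr_convex (varpi \<alpha> t n) (kernel_slope \<alpha> (t_shift \<alpha> t n)) (t 0) (t (n - 1))"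
    using pos_incr_convex_varpi assms by simp
  from prev_moment_nonneg[OF this] show "0 \<le> prev_moment t (varpi \<alpha> t n) (n - 1)" using assms by simp
  have "continuous_on {t 0..t (n - 2)} (varpi \<alpha> t (n - 1))" "continuous_on {t 0..t (n - 2)} (varpi \<alpha> t n)"
    using continuous_on_varpi assms by simp_all
  from prev_moment_diff[OF this]
  have "prev_moment t (varpi \<alpha> t (n - 1)) (n - 1) - prev_moment t (varpi \<alpha> t n) (n - 1)
      = prev_moment t (\<lambda>s. varpi \<alpha> t (n - 1) s - varpi \<alpha> t n s) (n - 1)"
    using assms by simp
  moreover have "0 \<le> prev_moment t (\<lambda>s. varpi \<alpha> t (n - 1) s - varpi \<alpha> t n s) (n - 1)"
    using prev_moment_nonneg[OF pos_incr_convex_varpi_diff[OF assms]] assms by simp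
  ultimately show "prev_moment t (varpi \<alpha> t n) (n - 1) \<le> prev_moment t (varpi \<alpha> t (n - 1)) (n - 1)"
    by simp
qed

lemma varpi_level_less: "2 \<le> n \<Longrightarrow> n \<le> N \<Longrightarrow> varpi \<alpha> t n (t (n - 2)) < varpi \<alpha> t (n - 1) (t (n - 2))"
  using pos_at_mesh[OF pos_incr_convex_varpi_diff, of n "n - 2"] by simp

lemma kern_last_le:
  assumes "2 \<le> n" "n \<le> N"
  shows "kern t (varpi \<alpha> t n) (n - 1)
    \<le> avg (varpi \<alpha> t n) (t (n - 2)) (t (n - 1)) + prev_moment t (varpi \<alpha> t n) (n - 1)"
  using kern_le_avg_add_prev_moment[OF pos_incr_convex_varpi, of n "n - 1"] assms
  by (simp add: numeral_2_eq_2)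

lemma avg_varpi_last_le:
  assumes n: "2 \<le> n" "n \<le> N"
  shows "avg (varpi \<alpha> t n) (t (n - 2)) (t (n - 1)) \<le> (varpi \<alpha> t n (t (n - 2)) + varpi \<alpha> t n (t (n - 1))) / 2"
    and "avg (varpi \<alpha> t n) (t (n - 2)) (t (n - 1))
      \<le> (varpi \<alpha> t n (t (n - 2)) + 2 * varpi \<alpha> t n ((t (n - 2) + t (n - 1)) / 2) + varpi \<alpha> t n (t (n - 1))) / 4"
proof -
  have "t (n - 2) < t (n - 1)" using mesh_step[of "n - 1"] n by (simp add: numeral_2_eq_2)
  moreover have "mono_slope (varpi \<alpha> t n) (kernel_slope \<alpha> (t_shift \<alpha> t n)) (t (n - 2)) (t (n - 1))"
    using mono_slope_mesh[OF pos_incr_convex_varpi, of n "n - 2" "n - 1"] n by simp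
  ultimately show "avg (varpi \<alpha> t n) (t (n - 2)) (t (n - 1))
      \<le> (varpi \<alpha> t n (t (n - 2)) + varpi \<alpha> t n (t (n - 1))) / 2"
    and "avg (varpi \<alpha> t n) (t (n - 2)) (t (n - 1))
      \<le> (varpi \<alpha> t n (t (n - 2)) + 2 * varpi \<alpha> t n ((t (n - 2) + t (n - 1)) / 2) + varpi \<alpha> t n (t (n - 1))) / 4"
    using avg_le_chord avg_le_two_chords by blast+
qed

lemma Akern_top_decreasing_in_level:
  assumes n: "2 \<le> n" "n \<le> N"
  shows "Akern \<alpha> t n 1 < Akern \<alpha> t (n - 1) 0"
proof -
  have "Akern \<alpha> t (n - 1) 0
      = 2 * (varpi \<alpha> t (n - 1) (t (n - 2)) + prev_moment t (varpi \<alpha> t (n - 1)) (n - 1))"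
    using Akern_0_eq[of "n - 1"] n by (simp add: numeral_2_eq_2)
  moreover have "Akern \<alpha> t n 1 = kern t (varpi \<alpha> t n) (n - 1)" using Akern_eq_kern[of "n - 1" n] n by simp
  moreover note kern_last_le[OF n] avg_varpi_last_le(1)[OF n] prev_moment_level_mono[OF n]
    varpi_level_less[OF n] varpi_last_lt[OF n]
  ultimately show ?thesis by argo
qed

lemma Akern_top_gap_decreasing_in_level:
  assumes n: "3 \<le> n" "n \<le> N"
  shows "Akern \<alpha> t n 1 - Akern \<alpha> t n 2 < Akern \<alpha> t (n - 1) 0 - Akern \<alpha> t (n - 1) 1"
proof -
  have n2: "2 \<le> n" using n by simp
  define h where "h = (\<lambda>s. varpi \<alpha> t (n - 1) s - varpi \<alpha> t n s)"
  have h: "pos_incr_convex h (\<lambda>s. kernel_slope \<alpha> (t_shift \<alpha> t (n - 1)) s - kernel_slope \<alpha> (t_shift \<alpha> t n) s)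
      (t 0) (t (n - 2))"
    unfolding h_def using pos_incr_convex_varpi_diff[OF n2 n(2)] .
  have "Akern \<alpha> t (n - 1) 0
      = 2 * (varpi \<alpha> t (n - 1) (t (n - 2)) + prev_moment t (varpi \<alpha> t (n - 1)) (n - 1))"
    using Akern_0_eq[of "n - 1"] n by (simp add: numeral_2_eq_2)
  moreover have "Akern \<alpha> t (n - 1) 1 = kern t (varpi \<alpha> t (n - 1)) (n - 2)"
    using Akern_eq_kern[of "n - 2" "n - 1"] n by (simp add: numeral_2_eq_2)
  moreover have "Akern \<alpha> t n 1 = kern t (varpi \<alpha> t n) (n - 1)" "Akern \<alpha> t n 2 = kern t (varpi \<alpha> t n) (n - 2)"
    using Akern_eq_kern[of "n - 1" n] Akern_eq_kern[of "n - 2" n] n by simp_all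
  moreover have "kern t (varpi \<alpha> t (n - 1)) (n - 2) - kern t (varpi \<alpha> t n) (n - 2) = kern t h (n - 2)"
    unfolding h_def using kern_level_diff[OF n2 n(2)] by simp
  moreover have "kern t h (n - 2) \<le> 5/4 * h (t (n - 2))"
    using order_trans[OF kern_le_avg_add_prev_moment[OF h, of "n - 2"] avg_add_prev_moment_le[OF h, of "n - 2"]] n
    by simp
  moreover note kern_last_le[OF n2 n(2)] avg_varpi_last_le(2)[OF n2 n(2)] prev_moment_level_mono[OF n2 n(2)]
    varpi_mid_le[OF n2 n(2)] varpi_last_lt[OF n2 n(2)]
  ultimately show ?thesis by (simp add: h_def)
qed

lemma Akern_pos_decreasing:
  assumes n: "2 \<le> n" "n \<le> N" and k: "1 \<le> k" "k \<le> n - 1"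
  shows "Akern \<alpha> t n (n - k) < Akern \<alpha> t n (n - k - 1) \<and> 0 < Akern \<alpha> t n (n - k)"
proof -
  have \<phi>: "pos_incr_convex (varpi \<alpha> t n) (kernel_slope \<alpha> (t_shift \<alpha> t n)) (t 0) (t (n - 1))"
    and K: "n - 1 \<le> N" using pos_incr_convex_varpi n by simp_all
  have A: "Akern \<alpha> t n (n - k) = kern t (varpi \<alpha> t n) k" using Akern_eq_kern k n by simp
  have "0 < kern t (varpi \<alpha> t n) k" using kern_pos[OF \<phi> K] n k by simp
  moreover have "kern t (varpi \<alpha> t n) k < Akern \<alpha> t n (n - k - 1)"
  proof (cases "k < n - 1")
    case True
    have "Akern \<alpha> t n (n - k - 1) = kern t (varpi \<alpha> t n) (k + 1)"
      using Akern_eq_kern[of "k + 1" n] True n by (simp add: diff_diff_add)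
    then show ?thesis using kern_strict_mono[OF \<phi> K] True n k by simp
  next
    case False
    then have "k = n - 1" "n - k - 1 = 0" using k by auto
    then show ?thesis using kern_lt_top[OF \<phi> K] Akern_0_eq[of n] n by simp
  qed
  ultimately show ?thesis using A by simp
qed

lemma Akern_decreasing_in_level:
  assumes n: "2 \<le> n" "n \<le> N" and k: "1 \<le> k" "k \<le> n - 1"
  shows "Akern \<alpha> t n (n - k) < Akern \<alpha> t (n - 1) (n - 1 - k)"
proof (cases "k \<le> n - 2")
  case True
  have "Akern \<alpha> t (n - 1) (n - 1 - k) - Akern \<alpha> t n (n - k)
      = kern t (\<lambda>s. varpi \<alpha> t (n - 1) s - varpi \<alpha> t n s) k"
    using Akern_eq_kern[of k "n - 1"] Akern_eq_kern[of k n] kern_level_diff[OF n True] True k n by simp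
  moreover have "k < N" using True n by arith
  then have "0 < kern t (\<lambda>s. varpi \<alpha> t (n - 1) s - varpi \<alpha> t n s) k"
    using kern_pos[OF pos_incr_convex_varpi_diff[OF n] _ k(1) True] n by simp
  ultimately show ?thesis by simp
next
  case False
  then have "n - 1 - k = 0" "n - k = 1" using k by auto
  then show ?thesis using Akern_top_decreasing_in_level[OF n] by simp
qed

lemma Akern_gap_decreasing_in_level:
  assumes n: "3 \<le> n" "n \<le> N" and k: "1 \<le> k" "k \<le> n - 2"
  shows "Akern \<alpha> t n (n - k - 1) - Akern \<alpha> t n (n - k)
    < Akern \<alpha> t (n - 1) (n - 2 - k) - Akern \<alpha> t (n - 1) (n - 1 - k)"
proof (cases "k < n - 2")
  case True
  have n2: "2 \<le> n" using n by simp
  define h where "h = (\<lambda>s. varpi \<alpha> t (n - 1) s - varpi \<alpha> t n s)"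
  have "Akern \<alpha> t (n - 1) (n - 1 - k) - Akern \<alpha> t n (n - k) = kern t h k"
    using Akern_eq_kern[of k "n - 1"] Akern_eq_kern[of k n] kern_level_diff[OF n2 n(2), of k] k n
    by (simp add: h_def)
  moreover have "Akern \<alpha> t (n - 1) (n - 2 - k) - Akern \<alpha> t n (n - k - 1) = kern t h (k + 1)"
    using Akern_eq_kern[of "k + 1" "n - 1"] Akern_eq_kern[of "k + 1" n] kern_level_diff[OF n2 n(2), of "k + 1"] True n
    by (simp add: h_def diff_diff_add)
  moreover have "kern t h k < kern t h (k + 1)"
    unfolding h_def using kern_strict_mono[OF pos_incr_convex_varpi_diff[OF n2 n(2)]] True k n by simp
  ultimately show ?thesis by simp
next
  case False
  then have "n - 2 - k = 0" "n - 1 - k = 1" "n - k - 1 = 1" "n - k = 2" using k n by auto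
  then show ?thesis using Akern_top_gap_decreasing_in_level[OF n] by simp
qed

end

theorem lemma2p2:
  fixes \<alpha> T :: real and t :: "nat \<Rightarrow> real" and N :: nat
  assumes alpha: "0 < \<alpha>" "\<alpha> < 1"
    and t0: "t 0 = 0" and mesh: "\<And>k. 1 \<le> k \<Longrightarrow> k \<le> N \<Longrightarrow> t (k - 1) < t k"
    and tN: "t N = T"
    and ratio_ge: "\<And>k. 2 \<le> k \<Longrightarrow> k \<le> N \<Longrightarrow> ratio t k \<ge> rstar \<alpha>"
  shows "(\<forall>n k. 2 \<le> n \<and> n \<le> N \<and> 1 \<le> k \<and> k \<le> n - 1 \<longrightarrow>
            Akern \<alpha> t n (n - k - 1) > Akern \<alpha> t n (n - k) \<and> Akern \<alpha> t n (n - k) > 0)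
       \<and> (\<forall>n k. 2 \<le> n \<and> n \<le> N \<and> 1 \<le> k \<and> k \<le> n - 1 \<longrightarrow>
            Akern \<alpha> t (n - 1) (n - 1 - k) > Akern \<alpha> t n (n - k))
       \<and> (\<forall>n k. 3 \<le> n \<and> n \<le> N \<and> 1 \<le> k \<and> k \<le> n - 2 \<longrightarrow>
            Akern \<alpha> t (n - 1) (n - 2 - k) - Akern \<alpha> t (n - 1) (n - 1 - k)
              > Akern \<alpha> t n (n - k - 1) - Akern \<alpha> t n (n - k))"
proof -
  interpret kernel_mesh t N \<alpha>
  proof
    show "385/1000 \<le> ratio t k" if "2 \<le> k" "k \<le> N" for k
      using ratio_ge[OF that] rstar_gt[OF alpha] by simp
  qed (use mesh alpha in auto)
  show ?thesis
    using Akern_pos_decreasing Akern_decreasing_in_level Akern_gap_decreasing_in_level by blast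
qed

end
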